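(* For real $\nu$ let $K_\nu$ denote the modified Bessel function of the second kind. The following assertions are true: (a) $u\mapsto K_{\nu}'(u)/K_{\nu}^2(u)$ is strictly decreasing on $(0,\infty)$ for all $|\nu|\geq 1$; (b) $u\mapsto K_{\nu}'(u)/K_{\nu}(u)$ is strictly increasing on $(0,\infty)$ for all $\nu\in\mathbb{R}$; (c) $u\mapsto uK_{\nu}'(u)/K_{\nu}(u)$ is strictly decreasing on $(0,\infty)$ for all $\nu\in\mathbb{R}$; (d) $u\mapsto uK_{\nu}'(u)$ is strictly increasing on $(0,\infty)$ for all $\nu\in\mathbb{R}$; (e) $u\mapsto u^2K_{\nu}'(u)$ is strictly increasing on $(0,\infty)$ for all $|\nu|\geq 5/4$; (f) $u\mapsto u^2K_{\nu}'(u)$ is strictly increasing on $(2,\infty)$ for all $\nu\in\mathbb{R}$. In particular, for all $u_1,u_2>0$ and $|\nu|\geq 1$ the following chain of inequalities holds: $$\frac{2K_{\nu}(u_1)K_{\nu}(u_2)}{K_{\nu}(u_1)+K_{\nu}(u_2)}\leq K_{\nu}\left(\frac{u_1+u_2}{2}\right)\leq \sqrt{K_{\nu}(u_1)K_{\nu}(u_2)} \leq K_{\nu}\left(\sqrt{u_1u_2}\right)\leq \frac{K_{\nu}(u_1)+K_{\nu}(u_2)}{2}.$$ Moreover, the second, third and fourth inequalities hold true for all $\nu\in\mathbb{R}$. In addition, for $|\nu|\geq 5/4$ and $u_1,u_2>0$, $$K_{\nu}\left(\frac{2u_1u_2}{u_1+u_2}\right)\leq\frac{K_{\nu}(u_1)+K_{\nu}(u_2)}{2},$$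 and this last inequality holds true for all $u_1,u_2>2$ and all $\nu\in\mathbb{R}$. In each of these inequalities equality holds if and only if $u_1=u_2$.
   Context: $K_\nu$ is the modified Bessel function of the second kind (MacDonald function), which for $u>0$, $\nu\in\mathbb{R}$ has the representation $K_{\nu}(u)=\int_0^{\infty}e^{-u\cosh t}\cosh(\nu t)\,dt>0$; equivalently $K_\nu(u)=\frac{\pi}{2}\frac{I_{-\nu}(u)-I_\nu(u)}{\sin \nu\pi}$ (limiting value for integer $\nu$), where $I_\nu$ is the modified Bessel function of the first kind. *)

theory Defs
  imports "HOL-Analysis.Analysis"
begin

definition besselK :: "real \<Rightarrow> real \<Rightarrow> real" where
  "besselK \<nu> u = integral {0..} (\<lambda>t. exp (- u * cosh t) * cosh (\<nu> * t))"

end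

theory Submission
  imports Defs
begin

text \<open>Write \<open>K_d(u)\<close> for the integral of \<open>cosh t ^ d * exp (- u cosh t) * cosh (\<nu> t)\<close> over
  \<open>t \<ge> 0\<close>, so that \<open>K = K_0\<close> and \<open>K_d' = - K_(d+1)\<close>. Integrating by parts gives the Bessel equation
  \<open>u\<^sup>2 K_2 = u K_1 + (u\<^sup>2 + \<nu>\<^sup>2) K_0\<close>, hence \<open>q = - u K'/K\<close> solves the Riccati equation
  \<open>u q' = q\<^sup>2 - u\<^sup>2 - \<nu>\<^sup>2\<close>. A first-crossing argument for this equation shows \<open>q\<^sup>2 > u\<^sup>2 + \<nu>\<^sup>2\<close>
  for all \<open>u > 0\<close>, and \<open>q < u\<^sup>2 + \<nu>\<^sup>2\<close> when \<open>\<bar>\<nu>\<bar> \<ge> 5/4\<close> or \<open>u > 2\<close>. These bounds, together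
  with the strict Cauchy-Schwarz inequality \<open>K_1\<^sup>2 < K_0 K_2\<close>, fix the signs of the derivatives of
  the functions in (a)-(f). The mean inequalities are strict midpoint convexity of \<open>1/K\<close>, \<open>ln K\<close>,
  \<open>- ln K \<circ> exp\<close>, \<open>K \<circ> exp\<close> and \<open>K \<circ> inverse\<close>, whose derivatives are increasing by (a)-(e).\<close>

lemma monotone_on_cong:
  "(\<And>x. x \<in> A \<Longrightarrow> f x = g x) \<Longrightarrow> monotone_on A r s f \<longleftrightarrow> monotone_on A r s g"
  by (auto simp: monotone_on_def)

lemma strict_mono_on_Ioi_if_deriv_pos:
  fixes f f' :: "real \<Rightarrow> real"
  assumes "\<And>x. x > a \<Longrightarrow> (f has_real_derivative f' x) (at x)" "\<And>x. x > a \<Longrightarrow> f' x > 0"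
  shows "strict_mono_on {a<..} f"
proof (rule strict_mono_onI)
  fix r s assume rs: "r \<in> {a<..}" "s \<in> {a<..}" "r < s"
  show "f r < f s"
  proof (rule DERIV_pos_imp_increasing[OF rs(3)])
    fix x assume "r \<le> x" "x \<le> s"
    hence "x > a" using rs by auto
    thus "\<exists>y. (f has_real_derivative y) (at x) \<and> 0 < y" using assms by blast
  qed
qed

lemma strict_antimono_on_Ioi_if_deriv_neg:
  fixes f f' :: "real \<Rightarrow> real"
  assumes "\<And>x. x > a \<Longrightarrow> (f has_real_derivative f' x) (at x)" "\<And>x. x > a \<Longrightarrow> f' x < 0"
  shows "strict_antimono_on {a<..} f"
proof (rule monotone_onI)
  fix r s assume rs: "r \<in> {a<..}" "s \<in> {a<..}" "r < s"
  show "f s < f r"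
  proof (rule DERIV_neg_imp_decreasing[OF rs(3)])
    fix x assume "r \<le> x" "x \<le> s"
    hence "x > a" using rs by auto
    thus "\<exists>y. (f has_real_derivative y) (at x) \<and> y < 0" using assms by blast
  qed
qed

lemma midpoint_strict_convex_if_deriv_strict_mono:
  fixes \<phi> \<phi>' :: "real \<Rightarrow> real"
  assumes I: "is_interval I"
    and der: "\<And>x. x \<in> I \<Longrightarrow> (\<phi> has_real_derivative \<phi>' x) (at x)"
    and mono: "strict_mono_on I \<phi>'"
    and ab: "a \<in> I" "b \<in> I" "a \<noteq> b"
  shows "2 * \<phi> ((a + b) / 2) < \<phi> a + \<phi> b"
proof -
  have mid: "2 * \<phi> ((a + b) / 2) < \<phi> a + \<phi> b" if ab: "a \<in> I" "b \<in> I" "a < b" for a b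
  proof -
    define m where "m = (a + b) / 2"
    have am: "a < m" "m < b" using ab(3) unfolding m_def by auto
    have sub: "x \<in> I" if "a \<le> x" "x \<le> b" for x
      using I ab(1,2) that unfolding is_interval_1 by blast
    have "(\<phi> has_real_derivative \<phi>' x) (at x)" if "a \<le> x" "x \<le> m" for x
      using am that by (intro der sub) auto
    from MVT2[OF am(1) this] obtain z1 where z1: "a < z1" "z1 < m" "\<phi> m - \<phi> a = (m - a) * \<phi>' z1"
      by blast
    have "(\<phi> has_real_derivative \<phi>' x) (at x)" if "m \<le> x" "x \<le> b" for x
      using am that by (intro der sub) auto
    from MVT2[OF am(2) this] obtain z2 where z2: "m < z2" "z2 < b" "\<phi> b - \<phi> m = (b - m) * \<phi>' z2"
      by blast
    have "z1 \<in> I" "z2 \<in> I" using z1 z2 am by (auto intro!: sub)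
    hence "\<phi>' z1 < \<phi>' z2" using strict_mono_onD[OF mono] z1 z2 by auto
    hence "(b - m) * \<phi>' z1 < (b - m) * \<phi>' z2" using am by simp
    moreover have "m - a = b - m" by (simp add: m_def field_simps)
    ultimately have "(m - a) * \<phi>' z1 < (b - m) * \<phi>' z2" by metis
    thus ?thesis using z1 z2 by (simp add: m_def)
  qed
  consider "a < b" | "b < a" using ab(3) by linarith
  thus ?thesis
  proof cases
    case 2
    thus ?thesis using mid[OF ab(2,1)] by (simp add: add.commute)
  qed (use mid[OF ab(1,2)] in simp)
qed

lemma le_and_eq_iff_if_strict:
  fixes A B :: real
  assumes "x \<noteq> y \<Longrightarrow> A < B" "x = y \<Longrightarrow> A = B"
  shows "A \<le> B \<and> (A = B \<longleftrightarrow> x = y)"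
  using assms by (cases "x = y") auto

lemma power_div_fact_le_exp:
  fixes x :: real
  assumes "x \<ge> 0"
  shows "x ^ n / fact n \<le> exp x"
proof -
  have s: "(\<lambda>n. x ^ n / fact n) sums exp x"
    using exp_converges[of x] by (simp add: divide_inverse mult.commute)
  have "(\<Sum>i\<in>{n}. x ^ i / fact i) \<le> exp x"
    using sum_le_suminf[OF sums_summable[OF s], of "{n}"] s sums_unique assms by fastforce
  thus ?thesis by simp
qed

lemma cosh_le_exp_abs: "cosh (x::real) \<le> exp \<bar>x\<bar>"
  by (cases "x \<ge> 0") (simp_all add: cosh_field_def)

lemma abs_exp_minus_one_minus_le: "\<bar>exp z - 1 - z\<bar> \<le> exp \<bar>z\<bar> * z\<^sup>2" for z :: real
proof -
  have "exp z - (1 + z) \<le> exp \<bar>z\<bar> * (z * z)"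
    using Taylor_exp_field[of z 1] by (simp add: numeral_2_eq_2)
  moreover have "1 + z \<le> exp z" by (rule exp_ge_add_one_self)
  ultimately show ?thesis unfolding power2_eq_square by (subst abs_le_iff) linarith
qed

lemma power_mult_exp_minus_le:
  fixes y c :: real
  assumes "y \<ge> 0" "c > 0"
  shows "y ^ n * exp (- c * y) \<le> fact n / c ^ n"
proof -
  have "(c * y) ^ n / fact n \<le> exp (c * y)" by (rule power_div_fact_le_exp) (use assms in simp)
  thus ?thesis using assms by (simp add: exp_minus power_mult_distrib field_simps)
qed

lemma cosh_power_exp_decay:
  fixes u a :: real and d :: nat
  assumes u: "u > 0"
  obtains C where "\<And>t. t \<ge> 0 \<Longrightarrow> cosh t ^ d * exp (- u * cosh t) * exp (a * t) \<le> C * exp (- t)"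
proof -
  define N where "N = nat \<lceil>real d + \<bar>a\<bar> + 1\<rceil>"
  have N: "real d + \<bar>a\<bar> + 1 \<le> real N" unfolding N_def by linarith
  have "cosh t ^ d * exp (- u * cosh t) * exp (a * t) \<le> fact N / (u/2) ^ N * exp (- t)"
    if t: "t \<ge> 0" for t
  proof -
    define y where "y = exp t"
    have "cosh t ^ d \<le> exp (real d * t)"
      using cosh_le_exp_abs[of t] t cosh_real_ge_1[of t] by (simp add: exp_of_nat_mult power_mono)
    moreover have "exp (- u * cosh t) \<le> exp (- (u/2) * y)"
      using u by (simp add: y_def cosh_field_def mult_left_mono)
    moreover have "exp (a * t) \<le> exp (\<bar>a\<bar> * t)" using t by (simp add: mult_right_mono)
    ultimately have "cosh t ^ d * exp (- u * cosh t) * exp (a * t)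
        \<le> exp (real d * t) * exp (- (u/2) * y) * exp (\<bar>a\<bar> * t)"
      by (intro mult_mono) auto
    also have "\<dots> = exp (- t) * (exp ((real d + \<bar>a\<bar> + 1) * t) * exp (- (u/2) * y))"
      by (simp add: exp_add[symmetric] algebra_simps)
    also have "\<dots> \<le> exp (- t) * (y ^ N * exp (- (u/2) * y))"
      using N t by (simp add: y_def exp_of_nat_mult[symmetric] mult_right_mono)
    also have "\<dots> \<le> exp (- t) * (fact N / (u/2) ^ N)"
      using power_mult_exp_minus_le[of y "u/2" N] u by (intro mult_left_mono) (auto simp: y_def)
    finally show ?thesis by (simp add: mult.commute)
  qed
  thus ?thesis using that by blast
qed

lemma absolutely_integrable_on_Ici_if_exp_decay:
  fixes f :: "real \<Rightarrow> real"
  assumes c: "continuous_on {0..} f" and b: "\<And>t. t \<ge> 0 \<Longrightarrow> \<bar>f t\<bar> \<le> C * exp (- t)"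
  shows "f absolutely_integrable_on {0..}"
proof -
  have g: "(\<lambda>t. C * exp (- 1 * t)) integrable_on {0..}"
    using integrable_on_cmult_left[OF integrable_on_exp_minus_to_infinity[of 1 0], of C] by simp
  have m: "f \<in> borel_measurable (lebesgue_on {0..})"
    by (rule continuous_imp_measurable_on_sets_lebesgue[OF c]) auto
  have "f integrable_on {0..}"
    by (rule measurable_bounded_by_integrable_imp_integrable_real[OF m g]) (use b in auto)
  from absolutely_integrable_integrable_bound[OF _ this g] b show ?thesis by auto
qed

lemma integral_Ici_pos:
  fixes f :: "real \<Rightarrow> real"
  assumes f: "f integrable_on {0..}" "continuous_on {0..} f" "\<And>t. t \<ge> 0 \<Longrightarrow> f t \<ge> 0"
    and x: "x \<ge> 0" "f x > 0"
  shows "integral {0..} f > 0"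
proof -
  have cont: "continuous_on {0..x+1} f" by (rule continuous_on_subset[OF f(2)]) auto
  hence int: "f integrable_on {0..x+1}" by (rule integrable_continuous_interval)
  have "integral {0..x+1} f \<ge> 0" by (rule integral_nonneg[OF int]) (use f(3) in auto)
  moreover have "integral {0..x+1} f \<noteq> 0"
    using integral_eq_0_iff[OF cont] x f(3) by auto
  moreover have "integral {0..x+1} f \<le> integral {0..} f"
    by (rule integral_subset_le) (use int f in auto)
  ultimately show ?thesis by linarith
qed

lemma has_real_derivative_if_quadratic_remainder:
  fixes f :: "real \<Rightarrow> real"
  assumes "\<delta> > 0" and rem: "\<And>h. \<bar>h\<bar> \<le> \<delta> \<Longrightarrow> \<bar>f (x + h) - f x - h * D\<bar> \<le> M * h\<^sup>2"
  shows "(f has_real_derivative D) (at x)"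
  unfolding DERIV_def
proof (rule LIM_zero_cancel, rule Lim_null_comparison)
  have "\<forall>\<^sub>F h in at 0. h \<noteq> 0 \<and> \<bar>h\<bar> < \<delta>"
    using \<open>\<delta> > 0\<close> by (auto simp: eventually_at dist_real_def intro!: exI[of _ \<delta>])
  thus "\<forall>\<^sub>F h in at 0. norm ((f (x + h) - f x) / h - D) \<le> \<bar>M\<bar> * \<bar>h\<bar>"
  proof (rule eventually_mono)
    fix h :: real assume h: "h \<noteq> 0 \<and> \<bar>h\<bar> < \<delta>"
    have "\<bar>(f (x + h) - f x) / h - D\<bar> = \<bar>f (x + h) - f x - h * D\<bar> / \<bar>h\<bar>"
      using h by (simp add: abs_divide[symmetric] diff_divide_distrib)
    also have "\<dots> \<le> M * h\<^sup>2 / \<bar>h\<bar>" using rem[of h] h by (simp add: divide_right_mono)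
    also have "\<dots> = M * \<bar>h\<bar>"
      using h by (simp add: field_simps power2_eq_square)
    also have "\<dots> \<le> \<bar>M\<bar> * \<bar>h\<bar>" by (simp add: mult_right_mono)
    finally show "norm ((f (x + h) - f x) / h - D) \<le> \<bar>M\<bar> * \<bar>h\<bar>" by simp
  qed
  show "((\<lambda>h. \<bar>M\<bar> * \<bar>h\<bar>) \<longlongrightarrow> 0) (at 0)"
    by (auto intro!: tendsto_eq_intros)
qed

lemma tendsto_integral_Icc_at_top:
  fixes f :: "real \<Rightarrow> real"
  assumes "f absolutely_integrable_on {a..}"
  shows "((\<lambda>b. integral {a..b} f) \<longlongrightarrow> integral {a..} f) at_top"
proof -
  have "((\<lambda>b. set_lebesgue_integral lebesgue {a..b} f) \<longlongrightarrow> set_lebesgue_integral lebesgue {a..} f) at_top"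
    by (rule tendsto_set_lebesgue_integral_at_top[OF _ assms]) auto
  moreover have "set_lebesgue_integral lebesgue {a..b} f = integral {a..b} f" for b
    by (rule set_lebesgue_integral_eq_integral(2)[OF set_integrable_subset[OF assms]]) auto
  ultimately show ?thesis using set_lebesgue_integral_eq_integral(2)[OF assms] by simp
qed

lemma exp_mean_ln_eq_sqrt: "x > 0 \<Longrightarrow> y > 0 \<Longrightarrow> exp ((ln x + ln y) / 2) = sqrt (x * y)"
  by (simp add: ln_mult powr_half_sqrt[symmetric] powr_def)

section \<open>The moments of the MacDonald kernel\<close>

definition bessel_kernel :: "nat \<Rightarrow> real \<Rightarrow> real \<Rightarrow> real \<Rightarrow> real" where
  "bessel_kernel d \<nu> u t = cosh t ^ d * exp (- u * cosh t) * cosh (\<nu> * t)"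

text \<open>\<open>besselK_moment d \<nu> u\<close> is \<open>(-1)^d\<close> times the \<open>d\<close>-th derivative of \<open>besselK \<nu>\<close> at \<open>u\<close>.\<close>
definition besselK_moment :: "nat \<Rightarrow> real \<Rightarrow> real \<Rightarrow> real" where
  "besselK_moment d \<nu> u = integral {0..} (bessel_kernel d \<nu> u)"

lemma besselK_eq_moment_0: "besselK \<nu> = besselK_moment 0 \<nu>"
  by (simp add: fun_eq_iff besselK_def besselK_moment_def bessel_kernel_def[abs_def])

lemma bessel_kernel_nonneg: "bessel_kernel d \<nu> u t \<ge> 0"
  by (simp add: bessel_kernel_def)

lemma continuous_on_bessel_kernel: "continuous_on S (bessel_kernel d \<nu> u)"
  unfolding bessel_kernel_def by (intro continuous_intros)

lemma bessel_kernel_absolutely_integrable: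
  assumes u: "u > 0"
  shows "bessel_kernel d \<nu> u absolutely_integrable_on {0..}"
proof -
  obtain C where C: "\<And>t. t \<ge> 0 \<Longrightarrow> cosh t ^ d * exp (- u * cosh t) * exp (\<bar>\<nu>\<bar> * t) \<le> C * exp (- t)"
    using cosh_power_exp_decay[OF u] by blast
  have "\<bar>bessel_kernel d \<nu> u t\<bar> \<le> C * exp (- t)" if t: "t \<ge> 0" for t
  proof -
    have "cosh (\<nu> * t) \<le> exp (\<bar>\<nu>\<bar> * t)"
      using cosh_le_exp_abs[of "\<nu> * t"] t by (simp add: abs_mult)
    hence "bessel_kernel d \<nu> u t \<le> cosh t ^ d * exp (- u * cosh t) * exp (\<bar>\<nu>\<bar> * t)"
      unfolding bessel_kernel_def by (intro mult_left_mono) auto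
    thus ?thesis using C[OF t] bessel_kernel_nonneg[of d \<nu> u t] by simp
  qed
  thus ?thesis by (intro absolutely_integrable_on_Ici_if_exp_decay continuous_on_bessel_kernel)
qed

lemma bessel_kernel_integrable: "u > 0 \<Longrightarrow> bessel_kernel d \<nu> u integrable_on {0..}"
  using bessel_kernel_absolutely_integrable set_lebesgue_integral_eq_integral(1) by blast

lemma bessel_kernel_has_integral:
  "u > 0 \<Longrightarrow> (bessel_kernel d \<nu> u has_integral besselK_moment d \<nu> u) {0..}"
  unfolding besselK_moment_def by (rule integrable_integral[OF bessel_kernel_integrable])

lemma besselK_moment_pos:
  assumes "u > 0"
  shows "besselK_moment d \<nu> u > 0"
  unfolding besselK_moment_def
  by (rule integral_Ici_pos[of _ 0])
     (simp_all add: bessel_kernel_integrable[OF assms] continuous_on_bessel_kernel bessel_kernel_nonneg,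
      simp add: bessel_kernel_def)

lemma bessel_kernel_taylor_remainder:
  assumes u: "u > 0" and h: "\<bar>h\<bar> \<le> u/2"
  shows "\<bar>bessel_kernel d \<nu> (u + h) t - bessel_kernel d \<nu> u t + h * bessel_kernel (Suc d) \<nu> u t\<bar>
           \<le> h\<^sup>2 * bessel_kernel (Suc (Suc d)) \<nu> (u/2) t"
proof -
  define c where "c = cosh t"
  define A where "A = c ^ d * cosh (\<nu> * t) * exp (- u * c)"
  have c1: "c \<ge> 1" unfolding c_def by (rule cosh_real_ge_1)
  have A0: "A \<ge> 0" unfolding A_def using c1 by simp
  have "bessel_kernel d \<nu> (u + h) t - bessel_kernel d \<nu> u t + h * bessel_kernel (Suc d) \<nu> u t
      = A * (exp (- h * c) - 1 - (- h * c))"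
    unfolding bessel_kernel_def A_def c_def[symmetric]
    by (simp add: algebra_simps exp_add[symmetric] exp_diff)
  also have "\<bar>\<dots>\<bar> \<le> A * (exp \<bar>- h * c\<bar> * (- h * c)\<^sup>2)"
    using mult_left_mono[OF abs_exp_minus_one_minus_le[of "- h * c"] A0] A0 by (simp add: abs_mult)
  also have "\<dots> = h\<^sup>2 * (c ^ Suc (Suc d) * cosh (\<nu> * t) * exp (- u * c + \<bar>h\<bar> * c))"
    unfolding A_def exp_add using c1 by (simp add: abs_mult power2_eq_square algebra_simps)
  also have "\<dots> \<le> h\<^sup>2 * (c ^ Suc (Suc d) * cosh (\<nu> * t) * exp (- (u/2) * c))"
  proof -
    have "\<bar>h\<bar> * c \<le> (u/2) * c" using h c1 by (intro mult_right_mono) auto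
    hence "exp (- u * c + \<bar>h\<bar> * c) \<le> exp (- (u/2) * c)" by simp
    moreover have "0 \<le> c ^ Suc (Suc d) * cosh (\<nu> * t)" using c1 by simp
    ultimately show ?thesis by (simp add: mult_left_mono)
  qed
  also have "\<dots> = h\<^sup>2 * bessel_kernel (Suc (Suc d)) \<nu> (u/2) t"
    unfolding bessel_kernel_def c_def by (simp add: algebra_simps)
  finally show ?thesis .
qed

lemma besselK_moment_taylor_remainder:
  assumes u: "u > 0" and h: "\<bar>h\<bar> \<le> u/2"
  shows "\<bar>besselK_moment d \<nu> (u + h) - besselK_moment d \<nu> u + h * besselK_moment (Suc d) \<nu> u\<bar>
           \<le> h\<^sup>2 * besselK_moment (Suc (Suc d)) \<nu> (u/2)"
proof -
  have uh: "u + h > 0" "u/2 > 0" using h u by auto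
  have "((\<lambda>t. bessel_kernel d \<nu> (u + h) t - bessel_kernel d \<nu> u t + h * bessel_kernel (Suc d) \<nu> u t)
      has_integral (besselK_moment d \<nu> (u + h) - besselK_moment d \<nu> u + h * besselK_moment (Suc d) \<nu> u)) {0..}"
    by (intro has_integral_add has_integral_diff has_integral_mult_right bessel_kernel_has_integral uh u)
  moreover have "((\<lambda>t. h\<^sup>2 * bessel_kernel (Suc (Suc d)) \<nu> (u/2) t)
      has_integral (h\<^sup>2 * besselK_moment (Suc (Suc d)) \<nu> (u/2))) {0..}"
    by (intro has_integral_mult_right bessel_kernel_has_integral uh)
  ultimately have "norm (besselK_moment d \<nu> (u + h) - besselK_moment d \<nu> u + h * besselK_moment (Suc d) \<nu> u)
      \<le> (h\<^sup>2 * besselK_moment (Suc (Suc d)) \<nu> (u/2)) \<bullet> 1"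
    by (rule has_integral_norm_bound_integral_component)
       (use bessel_kernel_taylor_remainder[OF u h] in simp)
  thus ?thesis by simp
qed

lemma besselK_moment_has_derivative:
  assumes "u > 0"
  shows "(besselK_moment d \<nu> has_real_derivative - besselK_moment (Suc d) \<nu> u) (at u)"
  by (rule has_real_derivative_if_quadratic_remainder[of "u/2" _ _ _ "besselK_moment (Suc (Suc d)) \<nu> (u/2)"])
     (use assms besselK_moment_taylor_remainder[OF assms] in \<open>auto simp: mult.commute\<close>)

lemma besselK_pos: "u > 0 \<Longrightarrow> besselK \<nu> u > 0"
  by (simp add: besselK_eq_moment_0 besselK_moment_pos)

lemma besselK_has_derivative:
  "u > 0 \<Longrightarrow> (besselK \<nu> has_real_derivative - besselK_moment 1 \<nu> u) (at u)"
  using besselK_moment_has_derivative[of u 0 \<nu>] by (simp add: besselK_eq_moment_0)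

lemma deriv_besselK: "u > 0 \<Longrightarrow> deriv (besselK \<nu>) u = - besselK_moment 1 \<nu> u"
  by (rule DERIV_imp_deriv[OF besselK_has_derivative])

lemma besselK_moment_1_has_derivative:
  "u > 0 \<Longrightarrow> (besselK_moment 1 \<nu> has_real_derivative - besselK_moment 2 \<nu> u) (at u)"
  using besselK_moment_has_derivative[of u 1 \<nu>] by (simp add: numeral_2_eq_2)

lemma besselK_moment_1_sq_less:
  assumes u: "u > 0"
  shows "(besselK_moment 1 \<nu> u)\<^sup>2 < besselK_moment 0 \<nu> u * besselK_moment 2 \<nu> u"
proof -
  define K0 K1 K2 where "K0 = besselK_moment 0 \<nu> u" and "K1 = besselK_moment 1 \<nu> u"
    and "K2 = besselK_moment 2 \<nu> u"
  define l where "l = K1 / K0"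
  define g where "g t = (cosh t - l)\<^sup>2 * bessel_kernel 0 \<nu> u t" for t
  have K0: "K0 > 0" unfolding K0_def by (rule besselK_moment_pos[OF u])
  have "g = (\<lambda>t. bessel_kernel 2 \<nu> u t - 2 * l * bessel_kernel 1 \<nu> u t + l\<^sup>2 * bessel_kernel 0 \<nu> u t)"
    by (simp add: fun_eq_iff g_def bessel_kernel_def power2_eq_square algebra_simps)
  moreover have "((\<lambda>t. bessel_kernel 2 \<nu> u t - 2 * l * bessel_kernel 1 \<nu> u t + l\<^sup>2 * bessel_kernel 0 \<nu> u t)
      has_integral (K2 - 2 * l * K1 + l\<^sup>2 * K0)) {0..}"
    unfolding K0_def K1_def K2_def
    by (intro has_integral_add has_integral_diff has_integral_mult_right bessel_kernel_has_integral u)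
  moreover have "K2 - 2 * l * K1 + l\<^sup>2 * K0 = K2 - K1\<^sup>2 / K0"
    using K0 by (simp add: l_def power2_eq_square field_simps)
  ultimately have g_int: "(g has_integral (K2 - K1\<^sup>2 / K0)) {0..}" by simp
  obtain t where t: "t \<ge> 0" "cosh t \<noteq> l"
  proof (cases "l = 1")
    case True
    thus ?thesis using that[of 1] cosh_real_strict_mono[of 0 1] by simp
  qed (use that[of 0] in simp)
  have "integral {0..} g > 0"
  proof (rule integral_Ici_pos[OF _ _ _ t(1)])
    show "g integrable_on {0..}" using g_int by blast
    show "continuous_on {0..} g" unfolding g_def by (intro continuous_intros continuous_on_bessel_kernel)
    show "g s \<ge> 0" for s by (simp add: g_def bessel_kernel_nonneg)
    show "g t > 0" using t(2) by (simp add: g_def bessel_kernel_def)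
  qed
  hence "K1\<^sup>2 / K0 < K2" using integral_unique[OF g_int] by simp
  thus ?thesis using K0 by (simp add: K0_def K1_def K2_def divide_less_eq mult.commute)
qed

section \<open>The Bessel equation\<close>

text \<open>Its derivative in \<open>t\<close> is \<open>u\<^sup>2 K_2 - u K_1 - (u\<^sup>2 + \<nu>\<^sup>2) K_0\<close> at the level of integrands, and it
  vanishes at \<open>t = 0\<close> and \<open>t \<rightarrow> \<infinity>\<close>: this is the integration by parts behind the Bessel equation.\<close>
definition bessel_ode_primitive :: "real \<Rightarrow> real \<Rightarrow> real \<Rightarrow> real" where
  "bessel_ode_primitive \<nu> u t = - exp (- u * cosh t) * (u * sinh t * cosh (\<nu> * t) + \<nu> * sinh (\<nu> * t))"

lemma bessel_ode_primitive_has_derivative: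
  "(bessel_ode_primitive \<nu> u has_real_derivative
     u\<^sup>2 * bessel_kernel 2 \<nu> u t - u * bessel_kernel 1 \<nu> u t - (u\<^sup>2 + \<nu>\<^sup>2) * bessel_kernel 0 \<nu> u t) (at t)"
proof -
  have sq: "cosh t * (cosh t * X) = X + sinh t * (sinh t * X)" for X
    using cosh_square_eq[of t] by (simp add: power2_eq_square algebra_simps)
  show ?thesis unfolding bessel_ode_primitive_def
    by (rule derivative_eq_intros refl)+ (simp add: bessel_kernel_def power2_eq_square algebra_simps sq)
qed

lemma abs_bessel_ode_primitive_le:
  assumes u: "u > 0" and t: "t \<ge> 0"
  shows "\<bar>bessel_ode_primitive \<nu> u t\<bar> \<le> u * (cosh t ^ 1 * exp (- u * cosh t) * exp (\<bar>\<nu>\<bar> * t))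
           + \<bar>\<nu>\<bar> * (cosh t ^ 0 * exp (- u * cosh t) * exp (\<bar>\<nu>\<bar> * t))"
proof -
  have sinh_le: "\<bar>sinh x\<bar> \<le> cosh x" for x :: real
    using sinh_le_cosh_real[of "\<bar>x\<bar>"] by simp
  have "\<bar>u * sinh t * cosh (\<nu> * t) + \<nu> * sinh (\<nu> * t)\<bar> \<le> u * cosh t * cosh (\<nu> * t) + \<bar>\<nu>\<bar> * cosh (\<nu> * t)"
    using sinh_le[of t] sinh_le[of "\<nu> * t"] u
    by (auto simp: abs_mult intro!: order_trans[OF abs_triangle_ineq] add_mono mult_mono mult_left_mono)
  also have "\<dots> \<le> (u * cosh t + \<bar>\<nu>\<bar>) * exp (\<bar>\<nu>\<bar> * t)"
    using cosh_le_exp_abs[of "\<nu> * t"] t u cosh_real_ge_1[of t]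
    by (simp add: abs_mult distrib_right[symmetric] mult_left_mono)
  finally have "exp (- u * cosh t) * \<bar>u * sinh t * cosh (\<nu> * t) + \<nu> * sinh (\<nu> * t)\<bar>
      \<le> exp (- u * cosh t) * ((u * cosh t + \<bar>\<nu>\<bar>) * exp (\<bar>\<nu>\<bar> * t))"
    by (rule mult_left_mono) simp
  moreover have "\<bar>bessel_ode_primitive \<nu> u t\<bar>
      = exp (- u * cosh t) * \<bar>u * sinh t * cosh (\<nu> * t) + \<nu> * sinh (\<nu> * t)\<bar>"
    by (simp add: bessel_ode_primitive_def abs_mult)
  ultimately show ?thesis by (simp add: algebra_simps)
qed

lemma bessel_ode_primitive_tendsto_0:
  assumes u: "u > 0"
  shows "(bessel_ode_primitive \<nu> u \<longlongrightarrow> 0) at_top"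
proof -
  obtain C1 where C1: "\<And>t. t \<ge> 0 \<Longrightarrow> cosh t ^ 1 * exp (- u * cosh t) * exp (\<bar>\<nu>\<bar> * t) \<le> C1 * exp (- t)"
    using cosh_power_exp_decay[OF u] by blast
  obtain C0 where C0: "\<And>t. t \<ge> 0 \<Longrightarrow> cosh t ^ 0 * exp (- u * cosh t) * exp (\<bar>\<nu>\<bar> * t) \<le> C0 * exp (- t)"
    using cosh_power_exp_decay[OF u] by blast
  have "norm (bessel_ode_primitive \<nu> u t) \<le> (u * C1 + \<bar>\<nu>\<bar> * C0) * exp (- t)" if t: "t \<ge> 0" for t
  proof -
    have "norm (bessel_ode_primitive \<nu> u t) \<le> u * (C1 * exp (- t)) + \<bar>\<nu>\<bar> * (C0 * exp (- t))"
      using abs_bessel_ode_primitive_le[OF u t, of \<nu>] C1[OF t] C0[OF t] u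
      by (smt (verit) abs_ge_zero mult_left_mono real_norm_def)
    thus ?thesis by (simp add: algebra_simps)
  qed
  hence "\<forall>\<^sub>F t in at_top. norm (bessel_ode_primitive \<nu> u t) \<le> (u * C1 + \<bar>\<nu>\<bar> * C0) * exp (- t)"
    by (intro eventually_mono[OF eventually_ge_at_top[of 0]]) blast
  moreover have "((\<lambda>t. (u * C1 + \<bar>\<nu>\<bar> * C0) * exp (- t)) \<longlongrightarrow> 0) at_top"
    by (intro tendsto_mult_right_zero filterlim_compose[OF exp_at_bot filterlim_uminus_at_bot_at_top])
  ultimately show ?thesis by (rule Lim_null_comparison)
qed

lemma besselK_moment_ode:
  assumes u: "u > 0"
  shows "u\<^sup>2 * besselK_moment 2 \<nu> u = u * besselK_moment 1 \<nu> u + (u\<^sup>2 + \<nu>\<^sup>2) * besselK_moment 0 \<nu> u"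
proof -
  define H where "H = bessel_ode_primitive \<nu> u"
  define I where "I d b = integral {0..b} (bessel_kernel d \<nu> u)" for d b
  define g where "g t = u\<^sup>2 * bessel_kernel 2 \<nu> u t - u * bessel_kernel 1 \<nu> u t
                        - (u\<^sup>2 + \<nu>\<^sup>2) * bessel_kernel 0 \<nu> u t" for t
  have "H b = u\<^sup>2 * I 2 b - u * I 1 b - (u\<^sup>2 + \<nu>\<^sup>2) * I 0 b" if b: "b \<ge> 0" for b
  proof -
    have "(g has_integral (H b - H 0)) {0..b}"
    proof (rule fundamental_theorem_of_calculus[OF b])
      fix x
      show "(H has_vector_derivative g x) (at x within {0..b})"
        unfolding has_real_derivative_iff_has_vector_derivative[symmetric] g_def H_def
        by (rule has_field_derivative_at_within[OF bessel_ode_primitive_has_derivative])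
    qed
    moreover have "(g has_integral (u\<^sup>2 * I 2 b - u * I 1 b - (u\<^sup>2 + \<nu>\<^sup>2) * I 0 b)) {0..b}"
      unfolding g_def I_def
      by (intro has_integral_diff has_integral_mult_right integrable_integral
          integrable_continuous_interval continuous_on_bessel_kernel)
    ultimately show ?thesis by (simp add: H_def bessel_ode_primitive_def has_integral_unique)
  qed
  hence "\<forall>\<^sub>F b in at_top. H b = u\<^sup>2 * I 2 b - u * I 1 b - (u\<^sup>2 + \<nu>\<^sup>2) * I 0 b"
    by (intro eventually_mono[OF eventually_ge_at_top[of 0]]) simp
  hence "((\<lambda>b. u\<^sup>2 * I 2 b - u * I 1 b - (u\<^sup>2 + \<nu>\<^sup>2) * I 0 b) \<longlongrightarrow> 0) at_top"
    by (rule Lim_transform_eventually[OF bessel_ode_primitive_tendsto_0[OF u, of \<nu>, folded H_def]])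
  moreover have "((\<lambda>b. u\<^sup>2 * I 2 b - u * I 1 b - (u\<^sup>2 + \<nu>\<^sup>2) * I 0 b) \<longlongrightarrow>
      u\<^sup>2 * besselK_moment 2 \<nu> u - u * besselK_moment 1 \<nu> u - (u\<^sup>2 + \<nu>\<^sup>2) * besselK_moment 0 \<nu> u) at_top"
    unfolding I_def besselK_moment_def
    by (intro tendsto_intros tendsto_integral_Icc_at_top bessel_kernel_absolutely_integrable u)
  ultimately show ?thesis using tendsto_unique[OF trivial_limit_at_top_linorder] by fastforce
qed

section \<open>A comparison principle for the Riccati equation\<close>

lemma negative_if_deriv_neg_at_zeros:
  fixes h h' :: "real \<Rightarrow> real"
  assumes der: "\<And>x. x > a \<Longrightarrow> (h has_real_derivative h' x) (at x)"
    and zero: "\<And>x. x > a \<Longrightarrow> h x = 0 \<Longrightarrow> h' x < 0"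
    and x0: "a < x0" "h x0 < 0" and x1: "x0 < x1"
  shows "h x1 < 0"
proof (rule ccontr)
  assume "\<not> h x1 < 0"
  hence hx1: "0 \<le> h x1" by simp
  text \<open>The first zero \<open>z\<close> of \<open>h\<close> after \<open>x0\<close> is reached from below, contradicting \<open>h' z < 0\<close>.\<close>
  have cont: "continuous_on {x0..x1} h"
    using x0 by (intro continuous_at_imp_continuous_on ballI DERIV_isCont[OF der]) auto
  define T where "T = {x \<in> {x0..x1}. 0 \<le> h x}"
  have "closed T"
    unfolding T_def using continuous_on_closed_Collect_le[OF continuous_on_const cont] by simp
  moreover have "x1 \<in> T" "bdd_below T" using hx1 x1 unfolding T_def by auto
  ultimately have "Inf T \<in> T" by (intro closed_contains_Inf) auto
  define z where "z = Inf T"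
  have z: "x0 \<le> z" "z \<le> x1" "0 \<le> h z" using \<open>Inf T \<in> T\<close> unfolding T_def z_def by auto
  have below: "h y < 0" if "x0 \<le> y" "y < z" for y
  proof (rule ccontr)
    assume "\<not> h y < 0"
    hence "y \<in> T" using that z unfolding T_def by auto
    hence "z \<le> y" unfolding z_def by (rule cInf_lower[OF _ \<open>bdd_below T\<close>])
    thus False using that by simp
  qed
  have "x0 < z" using z x0 by (cases "z = x0") auto
  then obtain w where w: "x0 \<le> w" "w \<le> z" "h w = 0"
    using IVT'[of h x0 0 z] x0 z continuous_on_subset[OF cont, of "{x0..z}"] by auto
  hence "w = z" using below[of w] by (cases "w < z") auto
  hence hz: "h z = 0" using w by simp
  have az: "a < z" using x0 \<open>x0 < z\<close> by linarith
  obtain d where d: "d > 0" "\<And>e. e > 0 \<Longrightarrow> e < d \<Longrightarrow> h z < h (z - e)"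
    using DERIV_neg_dec_left[OF der[OF az] zero[OF az hz]] by blast
  define e where "e = min d (z - x0) / 2"
  have "e > 0" "e < d" "x0 \<le> z - e" using d(1) \<open>x0 < z\<close> unfolding e_def by (auto simp: min_def field_simps)
  thus False using d(2)[of e] below[of "z - e"] hz by auto
qed

lemma nonpos_then_negative_if_deriv_neg_at_zeros:
  fixes h h' :: "real \<Rightarrow> real"
  assumes der: "\<And>x. x > a \<Longrightarrow> (h has_real_derivative h' x) (at x)"
    and zero: "\<And>x. x > a \<Longrightarrow> h x = 0 \<Longrightarrow> h' x < 0"
    and x0: "a < x0" "h x0 \<le> 0" and x1: "x0 < x1"
  shows "h x1 < 0"
proof (cases "h x0 < 0")
  case True
  show ?thesis by (rule negative_if_deriv_neg_at_zeros[OF der zero x0(1) True x1])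
next
  case False
  hence h0: "h x0 = 0" using x0 by simp
  obtain d where d: "d > 0" "\<And>e. e > 0 \<Longrightarrow> e < d \<Longrightarrow> h (x0 + e) < h x0"
    using DERIV_neg_dec_right[OF der[OF x0(1)] zero[OF x0(1) h0]] by blast
  define e where "e = min d (x1 - x0) / 2"
  have e: "e > 0" "e < d" "x0 + e < x1" using d(1) x1 unfolding e_def by (auto simp: min_def field_simps)
  hence neg: "h (x0 + e) < 0" using d(2) h0 by simp
  have "a < x0 + e" using x0(1) e(1) by linarith
  from negative_if_deriv_neg_at_zeros[OF der zero this neg e(3)] show ?thesis .
qed

lemma riccati_square_lt_after:
  fixes q :: "real \<Rightarrow> real"
  assumes q': "\<And>x. x > 0 \<Longrightarrow> (q has_real_derivative ((q x)\<^sup>2 - x\<^sup>2 - \<nu>\<^sup>2) / x) (at x)"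
    and u: "u > 0" "(q u)\<^sup>2 \<le> u\<^sup>2 + \<nu>\<^sup>2" and x: "x > u"
  shows "(q x)\<^sup>2 < x\<^sup>2 + \<nu>\<^sup>2"
proof -
  define h where "h x = (q x)\<^sup>2 - x\<^sup>2 - \<nu>\<^sup>2" for x
  have "(h has_real_derivative 2 * q y * (h y / y) - 2 * y) (at y)" if "y > 0" for y
    unfolding h_def by (rule derivative_eq_intros q'[OF that] refl | simp)+
  moreover have "2 * q y * (h y / y) - 2 * y < 0" if "y > 0" "h y = 0" for y
    using that by simp
  ultimately have "h x < 0"
    by (rule nonpos_then_negative_if_deriv_neg_at_zeros[of 0]) (use u x in \<open>auto simp: h_def\<close>)
  thus ?thesis by (simp add: h_def)
qed

lemma riccati_square_gt:
  fixes q :: "real \<Rightarrow> real"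
  assumes q': "\<And>x. x > 0 \<Longrightarrow> (q has_real_derivative ((q x)\<^sup>2 - x\<^sup>2 - \<nu>\<^sup>2) / x) (at x)"
    and q_pos: "\<And>x. x > 0 \<Longrightarrow> q x > 0" and u: "u > 0"
  shows "(q u)\<^sup>2 > u\<^sup>2 + \<nu>\<^sup>2"
proof (rule ccontr)
  assume "\<not> ?thesis"
  hence "(q u)\<^sup>2 \<le> u\<^sup>2 + \<nu>\<^sup>2" by simp
  hence below: "(q x)\<^sup>2 \<le> x\<^sup>2 + \<nu>\<^sup>2" if "x \<ge> u" for x
    using riccati_square_lt_after[OF q' u, of x] that by (cases "x = u") auto
  define Q where "Q = q u"
  have Q0: "Q > 0" unfolding Q_def by (rule q_pos[OF u])
  have Q: "q x \<le> Q" if "x \<ge> u" for x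
    unfolding Q_def
  proof (rule DERIV_nonpos_imp_nonincreasing[OF that])
    fix y assume y: "u \<le> y" "y \<le> x"
    have "((q y)\<^sup>2 - y\<^sup>2 - \<nu>\<^sup>2) / y \<le> 0" using below[OF y(1)] y u by (simp add: divide_nonpos_pos)
    thus "\<exists>d. (q has_real_derivative d) (at y) \<and> d \<le> 0" using q'[of y] y u by auto
  qed
  text \<open>Once \<open>x\<close> exceeds \<open>Q + 1\<close>, the bound \<open>q \<le> Q\<close> forces \<open>q' \<le> -1\<close>, which drives \<open>q\<close> negative.\<close>
  define U where "U = u + Q + 1"
  have "q (U + Q + 1) + (U + Q + 1) \<le> q U + U"
  proof (rule DERIV_nonpos_imp_nonincreasing[where f = "\<lambda>x. q x + x"])
    fix x assume x: "U \<le> x" "x \<le> U + Q + 1"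
    have x0: "x > 0" and qx: "q x \<le> Q" "q x > 0" using x Q0 u Q[of x] q_pos[of x] by (auto simp: U_def)
    have "(q x)\<^sup>2 \<le> Q\<^sup>2" using qx by (intro power_mono) auto
    moreover have "Q * Q \<le> x * (x - 1)" using x Q0 u by (intro mult_mono) (auto simp: U_def)
    ultimately have "(q x)\<^sup>2 - x\<^sup>2 - \<nu>\<^sup>2 \<le> - x"
      by (simp add: power2_eq_square algebra_simps) (use zero_le_square[of \<nu>] in linarith)
    hence "((q x)\<^sup>2 - x\<^sup>2 - \<nu>\<^sup>2) / x \<le> - 1" using x0 by (simp add: divide_le_eq)
    hence "((q x)\<^sup>2 - x\<^sup>2 - \<nu>\<^sup>2) / x + 1 \<le> 0" by linarith
    thus "\<exists>d. ((\<lambda>x. q x + x) has_real_derivative d) (at x) \<and> d \<le> 0"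
      using DERIV_add[OF q'[OF x0] DERIV_ident] by blast
  qed (use Q0 in simp)
  moreover have "q U \<le> Q" "q (U + Q + 1) > 0" using Q q_pos u Q0 by (auto simp: U_def)
  ultimately show False by linarith
qed

text \<open>With \<open>q \<ge> 25/16\<close> one gets \<open>q\<^sup>2 - x\<^sup>2 - \<nu>\<^sup>2 > q\<^sup>2 - q \<ge> (9/25) q\<^sup>2\<close>, i.e. \<open>(1/q)' \<le> - (9/25) / x\<close>.\<close>
lemma riccati_inverse_plus_log_antimono:
  fixes q :: "real \<Rightarrow> real"
  assumes b: "b \<ge> 0"
    and q': "\<And>x. x > b \<Longrightarrow> (q has_real_derivative ((q x)\<^sup>2 - x\<^sup>2 - \<nu>\<^sup>2) / x) (at x)"
    and above: "\<And>x. x > b \<Longrightarrow> q x > x\<^sup>2 + \<nu>\<^sup>2" and big: "\<And>x. x > b \<Longrightarrow> x\<^sup>2 + \<nu>\<^sup>2 \<ge> 25/16"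
    and xy: "b < x" "x \<le> y"
  shows "1 / q y + 9/25 * ln y \<le> 1 / q x + 9/25 * ln x"
proof (rule DERIV_nonpos_imp_nonincreasing[OF xy(2)])
  fix z assume z: "x \<le> z" "z \<le> y"
  hence zb: "z > b" and z0: "z > 0" using xy b by auto
  define p where "p = q z"
  have p: "p > z\<^sup>2 + \<nu>\<^sup>2" "p \<ge> 25/16" using above[OF zb] big[OF zb] by (auto simp: p_def)
  have "((\<lambda>x. 1 / q x + 9/25 * ln x) has_real_derivative
      (0 * q z - 1 * (((q z)\<^sup>2 - z\<^sup>2 - \<nu>\<^sup>2) / z)) / (q z * q z) + 9/25 * (1 / z)) (at z)"
    using p by (intro DERIV_add DERIV_divide DERIV_const q'[OF zb] DERIV_cmult DERIV_ln_divide z0)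
      (auto simp: p_def)
  moreover have "9/25 * p\<^sup>2 \<le> p\<^sup>2 - z\<^sup>2 - \<nu>\<^sup>2"
  proof -
    have "p * 25 \<le> p * (16 * p)" using p by (intro mult_left_mono) auto
    with p show ?thesis unfolding power2_eq_square by linarith
  qed
  hence "(9/25 * p\<^sup>2 - (p\<^sup>2 - z\<^sup>2 - \<nu>\<^sup>2)) / (z * p\<^sup>2) \<le> 0"
    using z0 p by (intro divide_nonpos_pos) auto
  moreover have "(0 * q z - 1 * (((q z)\<^sup>2 - z\<^sup>2 - \<nu>\<^sup>2) / z)) / (q z * q z) + 9/25 * (1 / z)
      = (9/25 * p\<^sup>2 - (p\<^sup>2 - z\<^sup>2 - \<nu>\<^sup>2)) / (z * p\<^sup>2)"
    using z0 p by (simp add: p_def field_simps power2_eq_square)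
  ultimately show "\<exists>d. ((\<lambda>x. 1 / q x + 9/25 * ln x) has_real_derivative d) (at z) \<and> d \<le> 0"
    by metis
qed

lemma riccati_not_above_parabola:
  fixes q :: "real \<Rightarrow> real"
  assumes b: "b \<ge> 0"
    and q': "\<And>x. x > b \<Longrightarrow> (q has_real_derivative ((q x)\<^sup>2 - x\<^sup>2 - \<nu>\<^sup>2) / x) (at x)"
    and above: "\<And>x. x > b \<Longrightarrow> q x > x\<^sup>2 + \<nu>\<^sup>2" and big: "\<And>x. x > b \<Longrightarrow> x\<^sup>2 + \<nu>\<^sup>2 \<ge> 25/16"
  shows False
proof -
  define u where "u = b + 1"
  define Q where "Q = q u"
  define V where "V = u * exp (25/9 / Q + 1)"
  have u: "u > b" "u > 0" using b by (auto simp: u_def)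
  have Q0: "Q > 0"
    using above[OF u(1)] zero_le_power2[of u] zero_le_power2[of \<nu>] unfolding Q_def by linarith
  have "0 < 25/9 / Q + 1" using Q0 by (intro add_pos_pos) simp_all
  hence "1 < exp (25/9 / Q + 1)" by (subst one_less_exp_iff)
  hence V: "V > u" using mult_strict_left_mono[of 1 _ u] u unfolding V_def by simp
  have "1 / q V + 9/25 * ln V \<le> 1 / Q + 9/25 * ln u"
    unfolding Q_def by (rule riccati_inverse_plus_log_antimono[OF b q' above big u(1)]) (use V in simp_all)
  also have "\<dots> = 9/25 * ln V - 9/25"
    using Q0 u by (simp add: V_def ln_mult field_simps)
  finally have "1 / q V \<le> - 9/25" by simp
  moreover have "0 < 1 / q V"
    using above[of V] V u zero_le_power2[of V] zero_le_power2[of \<nu>] by (intro divide_pos_pos) linarith+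
  ultimately show False by linarith
qed

text \<open>The hypothesis on \<open>(x\<^sup>2 + \<nu>\<^sup>2)\<^sup>2\<close> says that \<open>q\<close> can meet the parabola \<open>x\<^sup>2 + \<nu>\<^sup>2\<close> only
  crossing it upwards, after which it would stay above it forever.\<close>
lemma riccati_lt_parabola:
  fixes q :: "real \<Rightarrow> real"
  assumes a: "a \<ge> 0"
    and q': "\<And>x. x > a \<Longrightarrow> (q has_real_derivative ((q x)\<^sup>2 - x\<^sup>2 - \<nu>\<^sup>2) / x) (at x)"
    and cross: "\<And>x. x > a \<Longrightarrow> (x\<^sup>2 + \<nu>\<^sup>2)\<^sup>2 > 3 * x\<^sup>2 + \<nu>\<^sup>2"
    and big: "\<And>x. x > a \<Longrightarrow> x\<^sup>2 + \<nu>\<^sup>2 \<ge> 25/16"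
    and u: "u > a"
  shows "q u < u\<^sup>2 + \<nu>\<^sup>2"
proof (rule ccontr)
  assume not_lt: "\<not> ?thesis"
  define k where "k x = x\<^sup>2 + \<nu>\<^sup>2 - q x" for x
  have "(k has_real_derivative 2 * x - ((q x)\<^sup>2 - x\<^sup>2 - \<nu>\<^sup>2) / x) (at x)" if "x > a" for x
    unfolding k_def by (rule derivative_eq_intros q'[OF that] refl | simp)+
  moreover have "2 * x - ((q x)\<^sup>2 - x\<^sup>2 - \<nu>\<^sup>2) / x < 0" if "x > a" "k x = 0" for x
  proof -
    have "q x = x\<^sup>2 + \<nu>\<^sup>2" "x > 0" using that a by (auto simp: k_def)
    thus ?thesis using cross[OF that(1)] by (simp add: field_simps power2_eq_square)
  qed
  ultimately have "k x < 0" if "x > u" for x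
    by (rule nonpos_then_negative_if_deriv_neg_at_zeros) (use u that not_lt in \<open>auto simp: k_def\<close>)
  thus False
    using riccati_not_above_parabola[of u q \<nu>] q' big u a by (auto simp: k_def)
qed

section \<open>Bounds on the logarithmic derivative\<close>

text \<open>\<open>besselK_quot \<nu> u\<close> is \<open>- u K'(u) / K(u)\<close>.\<close>
definition besselK_quot :: "real \<Rightarrow> real \<Rightarrow> real" where
  "besselK_quot \<nu> u = u * besselK_moment 1 \<nu> u / besselK_moment 0 \<nu> u"

lemma besselK_quot_pos: "u > 0 \<Longrightarrow> besselK_quot \<nu> u > 0"
  unfolding besselK_quot_def by (simp add: besselK_moment_pos)

lemma besselK_moment_1_eq:
  "u > 0 \<Longrightarrow> besselK_moment 1 \<nu> u = besselK_quot \<nu> u * besselK_moment 0 \<nu> u / u"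
  unfolding besselK_quot_def using besselK_moment_pos[of u 0 \<nu>] by simp

lemma besselK_moment_2_eq:
  "u > 0 \<Longrightarrow> besselK_moment 2 \<nu> u = besselK_moment 0 \<nu> u * (besselK_quot \<nu> u + u\<^sup>2 + \<nu>\<^sup>2) / u\<^sup>2"
  using besselK_moment_ode[of u \<nu>] besselK_moment_1_eq[of u \<nu>]
  by (simp add: field_simps power2_eq_square)

lemma besselK_quot_has_derivative:
  assumes u: "u > 0"
  shows "(besselK_quot \<nu> has_real_derivative ((besselK_quot \<nu> u)\<^sup>2 - u\<^sup>2 - \<nu>\<^sup>2) / u) (at u)"
proof -
  let ?K0 = "besselK_moment 0 \<nu> u" and ?K1 = "besselK_moment 1 \<nu> u" and ?K2 = "besselK_moment 2 \<nu> u"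
  have K0: "?K0 > 0" by (rule besselK_moment_pos[OF u])
  have d0: "(besselK_moment 0 \<nu> has_real_derivative - ?K1) (at u)"
    using besselK_moment_has_derivative[OF u, of 0 \<nu>] by simp
  have d1: "(besselK_moment 1 \<nu> has_real_derivative - ?K2) (at u)"
    using besselK_moment_has_derivative[OF u, of 1 \<nu>] by (simp add: numeral_2_eq_2)
  have "((\<lambda>x. x * besselK_moment 1 \<nu> x / besselK_moment 0 \<nu> x) has_real_derivative
        ((1 * ?K1 + - ?K2 * u) * ?K0 - u * ?K1 * - ?K1) / (?K0 * ?K0)) (at u)"
    by (intro DERIV_divide DERIV_mult DERIV_ident d0 d1) (use K0 in simp)
  moreover have "((1 * ?K1 + - ?K2 * u) * ?K0 - u * ?K1 * - ?K1) / (?K0 * ?K0)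
      = ((besselK_quot \<nu> u)\<^sup>2 - u\<^sup>2 - \<nu>\<^sup>2) / u"
  proof -
    have K2: "?K2 = (u * ?K1 + (u\<^sup>2 + \<nu>\<^sup>2) * ?K0) / u\<^sup>2"
      using besselK_moment_ode[OF u, of \<nu>] u by (simp add: field_simps)
    show ?thesis unfolding K2 using K0 u by (simp add: besselK_quot_def field_simps power2_eq_square)
  qed
  ultimately show ?thesis by (simp add: besselK_quot_def[abs_def])
qed

lemma besselK_quot_square_gt: "u > 0 \<Longrightarrow> (besselK_quot \<nu> u)\<^sup>2 > u\<^sup>2 + \<nu>\<^sup>2"
  by (rule riccati_square_gt[OF besselK_quot_has_derivative besselK_quot_pos])

lemma square_sum_gt_of_order_ge:
  fixes x \<nu> :: real
  assumes n: "\<nu>\<^sup>2 \<ge> 25/16" and x: "x > 0"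
  shows "(x\<^sup>2 + \<nu>\<^sup>2)\<^sup>2 > 3 * x\<^sup>2 + \<nu>\<^sup>2"
proof -
  have "(x\<^sup>2 + \<nu>\<^sup>2)\<^sup>2 - (3 * x\<^sup>2 + \<nu>\<^sup>2) = (x\<^sup>2)\<^sup>2 + (2 * \<nu>\<^sup>2 - 3) * x\<^sup>2 + \<nu>\<^sup>2 * (\<nu>\<^sup>2 - 1)"
    by (simp add: power2_eq_square algebra_simps)
  moreover have "(2 * \<nu>\<^sup>2 - 3) * x\<^sup>2 \<ge> 0" "(x\<^sup>2)\<^sup>2 > 0" using n x by auto
  moreover have "\<nu>\<^sup>2 * (\<nu>\<^sup>2 - 1) > 0" using n by (intro mult_pos_pos) auto
  ultimately show ?thesis by linarith
qed

lemma square_sum_gt_of_gt_2: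
  fixes x \<nu> :: real
  assumes x: "x > 2"
  shows "(x\<^sup>2 + \<nu>\<^sup>2)\<^sup>2 > 3 * x\<^sup>2 + \<nu>\<^sup>2"
proof -
  have w: "x\<^sup>2 > 4" using power_strict_mono[of 2 x 2] x by simp
  have "(x\<^sup>2 + \<nu>\<^sup>2)\<^sup>2 - (3 * x\<^sup>2 + \<nu>\<^sup>2) = x\<^sup>2 * (x\<^sup>2 - 3) + 2 * \<nu>\<^sup>2 * x\<^sup>2 + (\<nu>\<^sup>2 - 1/2)\<^sup>2 - 1/4"
    by (simp add: power2_eq_square algebra_simps)
  moreover have "x\<^sup>2 * (x\<^sup>2 - 3) > 4 * 1" using w by (intro mult_strict_mono) auto
  moreover have "2 * \<nu>\<^sup>2 * x\<^sup>2 \<ge> 0" "(\<nu>\<^sup>2 - 1/2)\<^sup>2 \<ge> 0" by auto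
  ultimately show ?thesis by linarith
qed

lemma besselK_quot_lt:
  assumes "(\<bar>\<nu>\<bar> \<ge> 5/4 \<and> u > 0) \<or> u > 2"
  shows "besselK_quot \<nu> u < u\<^sup>2 + \<nu>\<^sup>2"
proof (cases "\<bar>\<nu>\<bar> \<ge> 5/4 \<and> u > 0")
  case True
  have "(5/4)\<^sup>2 \<le> \<bar>\<nu>\<bar>\<^sup>2" using True by (intro power_mono) auto
  hence n: "\<nu>\<^sup>2 \<ge> 25/16" by (simp add: power2_eq_square)
  show ?thesis
    by (rule riccati_lt_parabola[of 0])
       (use True n square_sum_gt_of_order_ge besselK_quot_has_derivative in \<open>auto simp: add_increasing\<close>)
next
  case False
  hence u: "u > 2" using assms by auto
  have big: "x\<^sup>2 + \<nu>\<^sup>2 \<ge> 25/16" if "x > 2" for x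
  proof -
    have "4 < x\<^sup>2" using power_strict_mono[of 2 x 2] that by simp
    thus ?thesis using zero_le_power2[of \<nu>] by linarith
  qed
  show ?thesis
    by (rule riccati_lt_parabola[of 2]) (use u big square_sum_gt_of_gt_2 besselK_quot_has_derivative in auto)
qed

section \<open>Monotonicity statements (a)-(f)\<close>

lemma besselK_moment_2_mul_0_lt:
  assumes \<nu>: "\<bar>\<nu>\<bar> \<ge> 1" and u: "u > 0"
  shows "besselK_moment 2 \<nu> u * besselK_moment 0 \<nu> u < 2 * (besselK_moment 1 \<nu> u)\<^sup>2"
proof -
  define q where "q = besselK_quot \<nu> u"
  define c where "c = (besselK_moment 0 \<nu> u / u)\<^sup>2"
  have q2: "q\<^sup>2 > u\<^sup>2 + \<nu>\<^sup>2" unfolding q_def by (rule besselK_quot_square_gt[OF u])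
  have q0: "q > 0" unfolding q_def by (rule besselK_quot_pos[OF u])
  have "1 \<le> \<nu>\<^sup>2" using power_mono[OF \<nu>, of 2] by simp
  moreover have "u\<^sup>2 > 0" using u by simp
  ultimately have "1 < q\<^sup>2" using q2 by linarith
  hence "1 < q" using power_less_imp_less_base[of 1 2 q] q0 by simp
  hence "q < q\<^sup>2" using mult_strict_left_mono[of 1 q q] q0 by (simp add: power2_eq_square)
  hence "q + u\<^sup>2 + \<nu>\<^sup>2 < 2 * q\<^sup>2" using q2 by linarith
  moreover have "c > 0" using besselK_moment_pos[OF u, of 0 \<nu>] u by (simp add: c_def)
  ultimately have "c * (q + u\<^sup>2 + \<nu>\<^sup>2) < c * (2 * q\<^sup>2)" by (rule mult_strict_left_mono)
  moreover have "besselK_moment 2 \<nu> u * besselK_moment 0 \<nu> u = c * (q + u\<^sup>2 + \<nu>\<^sup>2)"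
    unfolding besselK_moment_2_eq[OF u] c_def q_def using u by (simp add: power2_eq_square)
  moreover have "2 * (besselK_moment 1 \<nu> u)\<^sup>2 = c * (2 * q\<^sup>2)"
    unfolding besselK_moment_1_eq[OF u] c_def q_def using u by (simp add: power2_eq_square)
  ultimately show ?thesis by simp
qed

lemma strict_antimono_deriv_besselK_div_square:
  assumes "\<bar>\<nu>\<bar> \<ge> 1"
  shows "strict_antimono_on {0<..} (\<lambda>u. deriv (besselK \<nu>) u / (besselK \<nu> u)\<^sup>2)"
proof -
  have "strict_antimono_on {0<..} (\<lambda>u. - besselK_moment 1 \<nu> u / (besselK \<nu> u * besselK \<nu> u))"
  proof (rule strict_antimono_on_Ioi_if_deriv_neg)
    fix u :: real assume u: "u > 0"
    let ?K = "besselK \<nu> u" and ?K1 = "besselK_moment 1 \<nu> u" and ?K2 = "besselK_moment 2 \<nu> u"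
    have K: "?K > 0" by (rule besselK_pos[OF u])
    show "((\<lambda>u. - besselK_moment 1 \<nu> u / (besselK \<nu> u * besselK \<nu> u)) has_real_derivative
        (- (- ?K2) * (?K * ?K) - (- ?K1) * (- ?K1 * ?K + - ?K1 * ?K)) / ((?K * ?K) * (?K * ?K))) (at u)"
      using K by (intro DERIV_divide DERIV_minus DERIV_mult besselK_has_derivative
          besselK_moment_1_has_derivative u) simp
    have "- (- ?K2) * (?K * ?K) - (- ?K1) * (- ?K1 * ?K + - ?K1 * ?K) = ?K * (?K2 * ?K - 2 * ?K1\<^sup>2)"
      by (simp add: algebra_simps power2_eq_square)
    also have "\<dots> < 0"
      using besselK_moment_2_mul_0_lt[OF assms u] K by (simp add: besselK_eq_moment_0 mult_pos_neg)
    finally show "(- (- ?K2) * (?K * ?K) - (- ?K1) * (- ?K1 * ?K + - ?K1 * ?K)) / ((?K * ?K) * (?K * ?K)) < 0"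
      using K by (simp add: divide_neg_pos)
  qed
  thus ?thesis by (subst monotone_on_cong) (simp_all add: deriv_besselK power2_eq_square)
qed

lemma strict_mono_deriv_besselK_div_besselK:
  "strict_mono_on {0<..} (\<lambda>u. deriv (besselK \<nu>) u / besselK \<nu> u)"
proof -
  have "strict_mono_on {0<..} (\<lambda>u. - besselK_moment 1 \<nu> u / besselK \<nu> u)"
  proof (rule strict_mono_on_Ioi_if_deriv_pos)
    fix u :: real assume u: "u > 0"
    let ?K = "besselK \<nu> u" and ?K1 = "besselK_moment 1 \<nu> u" and ?K2 = "besselK_moment 2 \<nu> u"
    have K: "?K > 0" by (rule besselK_pos[OF u])
    show "((\<lambda>u. - besselK_moment 1 \<nu> u / besselK \<nu> u) has_real_derivative
        (- (- ?K2) * ?K - (- ?K1) * (- ?K1)) / (?K * ?K)) (at u)"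
      using K by (intro DERIV_divide DERIV_minus besselK_has_derivative besselK_moment_1_has_derivative u) simp
    have "- (- ?K2) * ?K - (- ?K1) * (- ?K1) > 0"
      using besselK_moment_1_sq_less[OF u, of \<nu>] by (simp add: besselK_eq_moment_0 power2_eq_square mult.commute)
    thus "(- (- ?K2) * ?K - (- ?K1) * (- ?K1)) / (?K * ?K) > 0" using K by simp
  qed
  thus ?thesis by (subst monotone_on_cong) (simp_all add: deriv_besselK)
qed

lemma strict_antimono_times_deriv_besselK_div_besselK:
  "strict_antimono_on {0<..} (\<lambda>u. u * deriv (besselK \<nu>) u / besselK \<nu> u)"
proof -
  have "strict_antimono_on {0<..} (\<lambda>u. - besselK_quot \<nu> u)"
  proof (rule strict_antimono_on_Ioi_if_deriv_neg)
    fix u :: real assume u: "u > 0"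
    show "((\<lambda>u. - besselK_quot \<nu> u) has_real_derivative - (((besselK_quot \<nu> u)\<^sup>2 - u\<^sup>2 - \<nu>\<^sup>2) / u)) (at u)"
      by (rule DERIV_minus[OF besselK_quot_has_derivative[OF u]])
    show "- (((besselK_quot \<nu> u)\<^sup>2 - u\<^sup>2 - \<nu>\<^sup>2) / u) < 0"
      using besselK_quot_square_gt[OF u, of \<nu>] u by simp
  qed
  thus ?thesis
    by (subst monotone_on_cong) (simp_all add: deriv_besselK besselK_quot_def besselK_eq_moment_0[symmetric])
qed

lemma strict_mono_times_deriv_besselK: "strict_mono_on {0<..} (\<lambda>u. u * deriv (besselK \<nu>) u)"
proof -
  have "strict_mono_on {0<..} (\<lambda>u. u * - besselK_moment 1 \<nu> u)"
  proof (rule strict_mono_on_Ioi_if_deriv_pos)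
    fix u :: real assume u: "u > 0"
    let ?K0 = "besselK_moment 0 \<nu> u" and ?K1 = "besselK_moment 1 \<nu> u" and ?K2 = "besselK_moment 2 \<nu> u"
    show "((\<lambda>u. u * - besselK_moment 1 \<nu> u) has_real_derivative 1 * - ?K1 + - (- ?K2) * u) (at u)"
      by (intro DERIV_mult DERIV_ident DERIV_minus besselK_moment_1_has_derivative u)
    have "1 * - ?K1 + - (- ?K2) * u = (u\<^sup>2 + \<nu>\<^sup>2) * ?K0 / u"
      using besselK_moment_ode[OF u, of \<nu>] u by (simp add: field_simps power2_eq_square)
    thus "1 * - ?K1 + - (- ?K2) * u > 0" using besselK_moment_pos[OF u, of 0 \<nu>] u by (simp add: add_pos_nonneg)
  qed
  thus ?thesis by (subst monotone_on_cong) (simp_all add: deriv_besselK)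
qed

lemma strict_mono_square_times_deriv_besselK:
  assumes a: "a \<ge> 0" and lt: "\<And>u. u > a \<Longrightarrow> besselK_quot \<nu> u < u\<^sup>2 + \<nu>\<^sup>2"
  shows "strict_mono_on {a<..} (\<lambda>u. u\<^sup>2 * deriv (besselK \<nu>) u)"
proof -
  have "strict_mono_on {a<..} (\<lambda>u. u\<^sup>2 * - besselK_moment 1 \<nu> u)"
  proof (rule strict_mono_on_Ioi_if_deriv_pos)
    fix u :: real assume ua: "u > a"
    hence u: "u > 0" using a by linarith
    let ?K0 = "besselK_moment 0 \<nu> u" and ?K1 = "besselK_moment 1 \<nu> u" and ?K2 = "besselK_moment 2 \<nu> u"
    have sq: "((\<lambda>x. x\<^sup>2) has_real_derivative 2 * u) (at u)"
      by (auto intro!: derivative_eq_intros)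
    show "((\<lambda>u. u\<^sup>2 * - besselK_moment 1 \<nu> u) has_real_derivative 2 * u * - ?K1 + - (- ?K2) * u\<^sup>2) (at u)"
      by (intro DERIV_mult sq DERIV_minus besselK_moment_1_has_derivative u)
    have "2 * u * - ?K1 + - (- ?K2) * u\<^sup>2 = ?K0 * (u\<^sup>2 + \<nu>\<^sup>2 - besselK_quot \<nu> u)"
      unfolding besselK_moment_2_eq[OF u] besselK_moment_1_eq[OF u] using u
      by (simp add: field_simps power2_eq_square)
    thus "2 * u * - ?K1 + - (- ?K2) * u\<^sup>2 > 0" using besselK_moment_pos[OF u, of 0 \<nu>] lt[OF ua] by simp
  qed
  thus ?thesis by (subst monotone_on_cong) (use a in \<open>simp_all add: deriv_besselK\<close>)
qed

section \<open>Mean inequalities\<close>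

lemma besselK_harmonic_mean_le:
  assumes \<nu>: "\<bar>\<nu>\<bar> \<ge> 1" and u: "u1 > 0" "u2 > 0"
  shows "2 * besselK \<nu> u1 * besselK \<nu> u2 / (besselK \<nu> u1 + besselK \<nu> u2) \<le> besselK \<nu> ((u1 + u2) / 2)
    \<and> (2 * besselK \<nu> u1 * besselK \<nu> u2 / (besselK \<nu> u1 + besselK \<nu> u2) = besselK \<nu> ((u1 + u2) / 2)
         \<longleftrightarrow> u1 = u2)"
proof (rule le_and_eq_iff_if_strict)
  let ?K = "besselK \<nu>"
  assume "u1 \<noteq> u2"
  have "2 * (1 / ?K ((u1 + u2) / 2)) < 1 / ?K u1 + 1 / ?K u2"
  proof (rule midpoint_strict_convex_if_deriv_strict_mono[of "{0<..}"])
    fix x :: real assume "x \<in> {0<..}"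
    hence x: "x > 0" by simp
    show "((\<lambda>u. 1 / ?K u) has_real_derivative - (deriv ?K x / (?K x)\<^sup>2)) (at x)"
      using DERIV_inverse_fun[OF besselK_has_derivative[OF x], of \<nu>] besselK_pos[OF x, of \<nu>]
      by (simp add: deriv_besselK[OF x] divide_inverse power2_eq_square)
  next
    show "strict_mono_on {0<..} (\<lambda>u. - (deriv ?K u / (?K u)\<^sup>2))"
      using strict_antimono_deriv_besselK_div_square[OF \<nu>] by (simp add: monotone_on_def)
  qed (use u \<open>u1 \<noteq> u2\<close> in \<open>simp_all add: is_interval_1\<close>)
  thus "2 * ?K u1 * ?K u2 / (?K u1 + ?K u2) < ?K ((u1 + u2) / 2)"
    using besselK_pos[of u1 \<nu>] besselK_pos[of u2 \<nu>] besselK_pos[of "(u1 + u2) / 2" \<nu>] u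
    by (simp add: field_simps)
qed (use besselK_pos[OF u(1), of \<nu>] in simp)

lemma besselK_midpoint_le_geometric_mean:
  assumes u: "u1 > 0" "u2 > 0"
  shows "besselK \<nu> ((u1 + u2) / 2) \<le> sqrt (besselK \<nu> u1 * besselK \<nu> u2)
    \<and> (besselK \<nu> ((u1 + u2) / 2) = sqrt (besselK \<nu> u1 * besselK \<nu> u2) \<longleftrightarrow> u1 = u2)"
proof (rule le_and_eq_iff_if_strict)
  let ?K = "besselK \<nu>"
  assume "u1 \<noteq> u2"
  have K: "?K u1 > 0" "?K u2 > 0" "?K ((u1 + u2) / 2) > 0" using besselK_pos u by auto
  have "2 * ln (?K ((u1 + u2) / 2)) < ln (?K u1) + ln (?K u2)"
  proof (rule midpoint_strict_convex_if_deriv_strict_mono[of "{0<..}"])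
    fix x :: real assume "x \<in> {0<..}"
    hence x: "x > 0" by simp
    show "((\<lambda>u. ln (?K u)) has_real_derivative deriv ?K x / ?K x) (at x)"
      using DERIV_chain2[OF DERIV_ln_divide[OF besselK_pos[OF x]] besselK_has_derivative[OF x]]
      by (simp add: deriv_besselK[OF x])
  qed (use u \<open>u1 \<noteq> u2\<close> strict_mono_deriv_besselK_div_besselK in \<open>simp_all add: is_interval_1\<close>)
  hence "ln ((?K ((u1 + u2) / 2))\<^sup>2) < ln (?K u1 * ?K u2)"
    using K by (simp add: ln_mult power2_eq_square)
  hence "(?K ((u1 + u2) / 2))\<^sup>2 < ?K u1 * ?K u2" using K by simp
  thus "?K ((u1 + u2) / 2) < sqrt (?K u1 * ?K u2)" by (rule real_less_rsqrt)
qed (use besselK_pos[OF u(1), of \<nu>] in simp)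

lemma geometric_mean_le_besselK_sqrt:
  assumes u: "u1 > 0" "u2 > 0"
  shows "sqrt (besselK \<nu> u1 * besselK \<nu> u2) \<le> besselK \<nu> (sqrt (u1 * u2))
    \<and> (sqrt (besselK \<nu> u1 * besselK \<nu> u2) = besselK \<nu> (sqrt (u1 * u2)) \<longleftrightarrow> u1 = u2)"
proof (rule le_and_eq_iff_if_strict)
  let ?K = "besselK \<nu>"
  assume "u1 \<noteq> u2"
  have K: "?K u1 > 0" "?K u2 > 0" "?K (sqrt (u1 * u2)) > 0" using besselK_pos u by auto
  have "2 * - ln (?K (exp ((ln u1 + ln u2) / 2))) < - ln (?K (exp (ln u1))) + - ln (?K (exp (ln u2)))"
  proof (rule midpoint_strict_convex_if_deriv_strict_mono[of UNIV])
    fix s :: real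
    have "((\<lambda>s. ?K (exp s)) has_real_derivative deriv ?K (exp s) * exp s) (at s)"
      using DERIV_chain2[OF besselK_has_derivative DERIV_exp] by (simp add: deriv_besselK)
    from DERIV_minus[OF DERIV_chain2[OF DERIV_ln_divide[OF besselK_pos] this]]
    show "((\<lambda>s. - ln (?K (exp s))) has_real_derivative - (exp s * deriv ?K (exp s) / ?K (exp s))) (at s)"
      by (simp add: mult.commute)
  next
    show "strict_mono_on UNIV (\<lambda>s. - (exp s * deriv ?K (exp s) / ?K (exp s)))"
      using strict_antimono_times_deriv_besselK_div_besselK[of \<nu>] by (simp add: monotone_on_def)
  qed (use u \<open>u1 \<noteq> u2\<close> in simp_all)
  hence "ln (?K u1 * ?K u2) < ln ((?K (sqrt (u1 * u2)))\<^sup>2)"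
    using K u by (simp add: exp_mean_ln_eq_sqrt ln_mult power2_eq_square)
  hence "?K u1 * ?K u2 < (?K (sqrt (u1 * u2)))\<^sup>2" using K by simp
  thus "sqrt (?K u1 * ?K u2) < ?K (sqrt (u1 * u2))" using K by (intro real_less_lsqrt) auto
qed (use u besselK_pos[OF u(2), of \<nu>] in simp)

lemma besselK_sqrt_le_arithmetic_mean:
  assumes u: "u1 > 0" "u2 > 0"
  shows "besselK \<nu> (sqrt (u1 * u2)) \<le> (besselK \<nu> u1 + besselK \<nu> u2) / 2
    \<and> (besselK \<nu> (sqrt (u1 * u2)) = (besselK \<nu> u1 + besselK \<nu> u2) / 2 \<longleftrightarrow> u1 = u2)"
proof (rule le_and_eq_iff_if_strict)
  let ?K = "besselK \<nu>"
  assume "u1 \<noteq> u2"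
  have "2 * ?K (exp ((ln u1 + ln u2) / 2)) < ?K (exp (ln u1)) + ?K (exp (ln u2))"
  proof (rule midpoint_strict_convex_if_deriv_strict_mono[of UNIV])
    fix s :: real
    show "((\<lambda>s. ?K (exp s)) has_real_derivative exp s * deriv ?K (exp s)) (at s)"
      using DERIV_chain2[OF besselK_has_derivative DERIV_exp] by (simp add: deriv_besselK mult.commute)
  next
    show "strict_mono_on UNIV (\<lambda>s. exp s * deriv ?K (exp s))"
      using strict_mono_times_deriv_besselK[of \<nu>] by (simp add: monotone_on_def)
  qed (use u \<open>u1 \<noteq> u2\<close> in simp_all)
  thus "?K (sqrt (u1 * u2)) < (?K u1 + ?K u2) / 2" using u by (simp add: exp_mean_ln_eq_sqrt)
qed (use u in simp)

lemma besselK_harmonic_point_le_arithmetic_mean: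
  assumes a: "a \<ge> 0" and mono: "strict_mono_on {a<..} (\<lambda>u. u\<^sup>2 * deriv (besselK \<nu>) u)"
    and u: "u1 > a" "u2 > a"
  shows "besselK \<nu> (2 * u1 * u2 / (u1 + u2)) \<le> (besselK \<nu> u1 + besselK \<nu> u2) / 2
    \<and> (besselK \<nu> (2 * u1 * u2 / (u1 + u2)) = (besselK \<nu> u1 + besselK \<nu> u2) / 2 \<longleftrightarrow> u1 = u2)"
proof (rule le_and_eq_iff_if_strict)
  let ?K = "besselK \<nu>"
  assume "u1 \<noteq> u2"
  have u0: "u1 > 0" "u2 > 0" using u a by auto
  define I where "I = {x::real. x > 0 \<and> 1 / x > a}"
  have "2 * ?K (1 / ((1 / u1 + 1 / u2) / 2)) < ?K (1 / (1 / u1)) + ?K (1 / (1 / u2))"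
  proof (rule midpoint_strict_convex_if_deriv_strict_mono[of I])
    show "is_interval I"
      unfolding is_interval_1
    proof (intro ballI allI impI)
      fix x y z assume xy: "x \<in> I" "y \<in> I" and z: "x \<le> z \<and> z \<le> y"
      hence z0: "z > 0" by (auto simp: I_def)
      have "1 / y \<le> 1 / z" using z z0 by (intro divide_left_mono) auto
      thus "z \<in> I" using xy z0 by (auto simp: I_def)
    qed
  next
    fix x :: real assume "x \<in> I"
    hence x: "x > 0" by (simp add: I_def)
    have "((\<lambda>x. 1 / x) has_real_derivative - 1 / x\<^sup>2) (at x)"
      using x by (auto intro!: derivative_eq_intros simp: power2_eq_square)
    from DERIV_chain2[OF besselK_has_derivative this]
    show "((\<lambda>x. ?K (1 / x)) has_real_derivative - ((1 / x)\<^sup>2 * deriv ?K (1 / x))) (at x)"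
      using x by (simp add: deriv_besselK power2_eq_square)
  next
    show "strict_mono_on I (\<lambda>x. - ((1 / x)\<^sup>2 * deriv ?K (1 / x)))"
    proof (rule strict_mono_onI)
      fix r s assume rs: "r \<in> I" "s \<in> I" "r < s"
      hence "1 / s < 1 / r" by (intro divide_strict_left_mono) (auto simp: I_def)
      moreover have "1 / s \<in> {a<..}" "1 / r \<in> {a<..}" using rs by (auto simp: I_def)
      ultimately show "- ((1 / r)\<^sup>2 * deriv ?K (1 / r)) < - ((1 / s)\<^sup>2 * deriv ?K (1 / s))"
        using strict_mono_onD[OF mono] by simp
    qed
  qed (use u u0 \<open>u1 \<noteq> u2\<close> in \<open>simp_all add: I_def\<close>)
  moreover have "1 / ((1 / u1 + 1 / u2) / 2) = 2 * u1 * u2 / (u1 + u2)" using u0 by (simp add: field_simps)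
  ultimately show "?K (2 * u1 * u2 / (u1 + u2)) < (?K u1 + ?K u2) / 2" by simp
qed (use u a in simp)

theorem theorem2:
  shows
   "(\<forall>\<nu>::real. \<bar>\<nu>\<bar> \<ge> 1 \<longrightarrow>
        strict_antimono_on {0<..} (\<lambda>u. deriv (besselK \<nu>) u / (besselK \<nu> u)^2))
  \<and> (\<forall>\<nu>::real. strict_mono_on {0<..} (\<lambda>u. deriv (besselK \<nu>) u / besselK \<nu> u))
  \<and> (\<forall>\<nu>::real. strict_antimono_on {0<..} (\<lambda>u. u * deriv (besselK \<nu>) u / besselK \<nu> u))
  \<and> (\<forall>\<nu>::real. strict_mono_on {0<..} (\<lambda>u. u * deriv (besselK \<nu>) u))
  \<and> (\<forall>\<nu>::real. \<bar>\<nu>\<bar> \<ge> 5/4 \<longrightarrow>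
        strict_mono_on {0<..} (\<lambda>u. u^2 * deriv (besselK \<nu>) u))
  \<and> (\<forall>\<nu>::real. strict_mono_on {2<..} (\<lambda>u. u^2 * deriv (besselK \<nu>) u))
  \<and> (\<forall>\<nu> u1 u2::real. \<bar>\<nu>\<bar> \<ge> 1 \<longrightarrow> u1 > 0 \<longrightarrow> u2 > 0 \<longrightarrow>
        2 * besselK \<nu> u1 * besselK \<nu> u2 / (besselK \<nu> u1 + besselK \<nu> u2)
          \<le> besselK \<nu> ((u1 + u2) / 2)
      \<and> (2 * besselK \<nu> u1 * besselK \<nu> u2 / (besselK \<nu> u1 + besselK \<nu> u2)
          = besselK \<nu> ((u1 + u2) / 2) \<longleftrightarrow> u1 = u2))
  \<and> (\<forall>\<nu> u1 u2::real. u1 > 0 \<longrightarrow> u2 > 0 \<longrightarrow>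
        besselK \<nu> ((u1 + u2) / 2) \<le> sqrt (besselK \<nu> u1 * besselK \<nu> u2)
      \<and> (besselK \<nu> ((u1 + u2) / 2) = sqrt (besselK \<nu> u1 * besselK \<nu> u2) \<longleftrightarrow> u1 = u2)
      \<and> sqrt (besselK \<nu> u1 * besselK \<nu> u2) \<le> besselK \<nu> (sqrt (u1 * u2))
      \<and> (sqrt (besselK \<nu> u1 * besselK \<nu> u2) = besselK \<nu> (sqrt (u1 * u2)) \<longleftrightarrow> u1 = u2)
      \<and> besselK \<nu> (sqrt (u1 * u2)) \<le> (besselK \<nu> u1 + besselK \<nu> u2) / 2
      \<and> (besselK \<nu> (sqrt (u1 * u2)) = (besselK \<nu> u1 + besselK \<nu> u2) / 2 \<longleftrightarrow> u1 = u2))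
  \<and> (\<forall>\<nu> u1 u2::real. (\<bar>\<nu>\<bar> \<ge> 5/4 \<and> u1 > 0 \<and> u2 > 0) \<or> (u1 > 2 \<and> u2 > 2) \<longrightarrow>
        besselK \<nu> (2 * u1 * u2 / (u1 + u2)) \<le> (besselK \<nu> u1 + besselK \<nu> u2) / 2
      \<and> (besselK \<nu> (2 * u1 * u2 / (u1 + u2)) = (besselK \<nu> u1 + besselK \<nu> u2) / 2
           \<longleftrightarrow> u1 = u2))"
proof -
  have e: "strict_mono_on {0<..} (\<lambda>u. u\<^sup>2 * deriv (besselK \<nu>) u)" if "\<bar>\<nu>\<bar> \<ge> 5/4" for \<nu> :: real
    by (rule strict_mono_square_times_deriv_besselK[of 0]) (use besselK_quot_lt that in auto)
  have f: "strict_mono_on {2<..} (\<lambda>u. u\<^sup>2 * deriv (besselK \<nu>) u)" for \<nu> :: real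
    by (rule strict_mono_square_times_deriv_besselK[of 2]) (use besselK_quot_lt in auto)
  have harmonic_point:
    "besselK \<nu> (2 * u1 * u2 / (u1 + u2)) \<le> (besselK \<nu> u1 + besselK \<nu> u2) / 2
      \<and> (besselK \<nu> (2 * u1 * u2 / (u1 + u2)) = (besselK \<nu> u1 + besselK \<nu> u2) / 2 \<longleftrightarrow> u1 = u2)"
    if "(\<bar>\<nu>\<bar> \<ge> 5/4 \<and> u1 > 0 \<and> u2 > 0) \<or> (u1 > 2 \<and> u2 > 2)" for \<nu> u1 u2 :: real
    using that besselK_harmonic_point_le_arithmetic_mean[OF _ e] besselK_harmonic_point_le_arithmetic_mean[OF _ f]
    by auto
  show ?thesis
    using strict_antimono_deriv_besselK_div_square strict_mono_deriv_besselK_div_besselK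
      strict_antimono_times_deriv_besselK_div_besselK strict_mono_times_deriv_besselK e f
      besselK_harmonic_mean_le besselK_midpoint_le_geometric_mean geometric_mean_le_besselK_sqrt
      besselK_sqrt_le_arithmetic_mean harmonic_point
    by blast
qed

end
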